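(* Let $r\ge 3$, $k\ge 2r+13$, $m=\lfloor (k-1)/2\rfloor$, $f(n)=\binom{m}{r-1}(n-m)+\binom{m}{r}+\mathbb{1}_{2\mid k}\binom{m}{r-2}$, and $N_{k,r}=\binom{r(k-1)}{r}+\binom{m}{r-1}m-\binom{m}{r}-\mathbb{1}_{2\mid k}\binom{m}{r-2}+r(k-1)$. Let $n>N_{k,r}$ and let $\mathcal H$ be a connected $n$-vertex $r$-graph with no Berge-path of length $k$ and with at least $f(n)$ hyperedges. Let $\mathcal H'$ be obtained from $\mathcal H$ by repeatedly deleting a vertex whose degree in the current hypergraph is less than $\binom{m}{r-1}$, together with all hyperedges containing it, until no such vertex remains. Then $\mathcal H'$ is connected.
   Context: An $r$-graph is a simple $r$-uniform hypergraph; the degree of a vertex is the number of hyperedges containing it; a hypergraph is connected if any two vertices are joined by a sequence of hyperedges with consecutive ones intersecting (equivalently, by a Berge-path). A Berge-path of length $t$ is an alternating sequence $v_1,e_1,\dots,e_t,v_{t+1}$ of $t+1$ distinct vertices and $t$ distinct hyperedges with $\{v_i,v_{i+1}\}\subseteq e_i$. $\mathbb{1}_{2\mid k}$ is $1$ if $k$ is even and $0$ otherwise. *)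

theory Defs
  imports Main
begin

definition r_graph :: "nat \<Rightarrow> 'a set \<Rightarrow> 'a set set \<Rightarrow> bool" where
  "r_graph r V E \<longleftrightarrow> finite V \<and> (\<forall>e\<in>E. e \<subseteq> V \<and> card e = r)"

definition hdegree :: "'a set set \<Rightarrow> 'a \<Rightarrow> nat" where
  "hdegree E v = card {e\<in>E. v \<in> e}"

definition hconnected :: "'a set \<Rightarrow> 'a set set \<Rightarrow> bool" where
  "hconnected V E \<longleftrightarrow>
     (\<forall>u\<in>V. \<forall>w\<in>V. u \<noteq> w \<longrightarrow>
        (\<exists>es. es \<noteq> [] \<and> set es \<subseteq> E \<and> u \<in> hd es \<and> w \<in> last es \<and>
              (\<forall>i. Suc i < length es \<longrightarrow> es ! i \<inter> es ! Suc i \<noteq> {})))"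

definition berge_path :: "'a set set \<Rightarrow> 'a list \<Rightarrow> 'a set list \<Rightarrow> bool" where
  "berge_path E vs es \<longleftrightarrow>
     length vs = Suc (length es) \<and> distinct vs \<and> distinct es \<and> set es \<subseteq> E \<and>
     (\<forall>i < length es. {vs ! i, vs ! Suc i} \<subseteq> es ! i)"

definition has_berge_path :: "'a set set \<Rightarrow> nat \<Rightarrow> bool" where
  "has_berge_path E t \<longleftrightarrow> (\<exists>vs es. berge_path E vs es \<and> length es = t)"

inductive peel_step :: "nat \<Rightarrow> 'a set \<times> 'a set set \<Rightarrow> 'a set \<times> 'a set set \<Rightarrow> bool"
  for d where
  "v \<in> V \<Longrightarrow> hdegree E v < d \<Longrightarrow> peel_step d (V, E) (V - {v}, {e\<in>E. v \<notin> e})"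

definition ind_even :: "nat \<Rightarrow> nat" where
  "ind_even k = (if even k then 1 else 0)"

end

theory Submission
  imports Defs "HOL.Binomial_Plus"
begin

text \<open>After the peeling every vertex has degree at least C(m, r - 1), and since each deleted
  vertex took fewer than C(m, r - 1) edges along, at least C(m, r - 1)(n' - m) edges survive on the
  n' remaining vertices. Suppose the peeled hypergraph is disconnected.

  If every vertex of some component starts a Berge path of length m + 1, take such a path ending at
  a shortest bridge of the original (connected) hypergraph leaving the component, and continue after
  the bridge with a path of length m grown greedily from the high minimum degree. The bridge edges
  were deleted by the peeling, so the three pieces form a Berge path of length 2m + 2 >= k.

  Otherwise every component contains a vertex u from which no Berge path of length m + 1 starts.
  Posa rotations of a path of length m from u show that its m + 1 vertices absorb every edge
  meeting them away from u. Removing these vertex sets one by one bounds the number of edges of a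
  component with c >= m + 1 vertices by (c - 1) C(m + 1, r) / m, and summing over two parts of the
  vertex set contradicts the edge count.\<close>

section \<open>Berge walks and paths\<close>

fun berge_walk :: "'a list \<Rightarrow> 'a set list \<Rightarrow> bool" where
  "berge_walk [v] [] \<longleftrightarrow> True"
| "berge_walk (v # w # vs) (e # es) \<longleftrightarrow> {v, w} \<subseteq> e \<and> berge_walk (w # vs) es"
| "berge_walk _ _ \<longleftrightarrow> False"

lemma berge_walk_iff_nth:
  "berge_walk vs es \<longleftrightarrow>
     length vs = Suc (length es) \<and> (\<forall>i<length es. {vs ! i, vs ! Suc i} \<subseteq> es ! i)"
proof (induction vs es rule: berge_walk.induct)
  case (2 v w vs e es)
  then show ?case
    by (auto simp: less_Suc_eq_0_disj)
next
  case ("3_1" es)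
  then show ?case by (cases es) auto
qed auto

lemma berge_path_iff:
  "berge_path E vs es \<longleftrightarrow> berge_walk vs es \<and> distinct vs \<and> distinct es \<and> set es \<subseteq> E"
  unfolding berge_path_def berge_walk_iff_nth by auto

lemma berge_walk_length: "berge_walk vs es \<Longrightarrow> length vs = Suc (length es)"
  by (simp add: berge_walk_iff_nth)

lemma berge_walk_not_Nil: "berge_walk vs es \<Longrightarrow> vs \<noteq> []"
  by (auto dest: berge_walk_length)

lemma berge_walk_last_eq_nth: "berge_walk vs es \<Longrightarrow> last vs = vs ! length es"
  by (simp add: berge_walk_length berge_walk_not_Nil last_conv_nth)

lemma berge_walk_nth_in_edge:
  "berge_walk vs es \<Longrightarrow> i < length es \<Longrightarrow> vs ! i \<in> es ! i \<and> vs ! Suc i \<in> es ! i"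
  by (simp add: berge_walk_iff_nth)

lemma last_append_tl: "xs \<noteq> [] \<Longrightarrow> ys \<noteq> [] \<Longrightarrow> last xs = hd ys \<Longrightarrow> last (xs @ tl ys) = last ys"
  by (cases ys) auto

lemma berge_walk_append:
  "berge_walk xs es1 \<Longrightarrow> berge_walk ys es2 \<Longrightarrow> last xs = hd ys \<Longrightarrow>
   berge_walk (xs @ tl ys) (es1 @ es2)"
proof (induction xs es1 rule: berge_walk.induct)
  case (1 v)
  then show ?case using berge_walk_not_Nil[of ys es2] by (cases ys) auto
qed auto

lemma berge_walk_join:
  "berge_walk (xs @ [a]) es1 \<Longrightarrow> {a, b} \<subseteq> g \<Longrightarrow> berge_walk (b # ys) es2 \<Longrightarrow>
   berge_walk (xs @ a # b # ys) (es1 @ g # es2)"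
  using berge_walk_append[of "xs @ [a]" es1 "a # b # ys" "g # es2"] by simp

lemma berge_walk_snoc:
  "berge_walk vs es \<Longrightarrow> {last vs, z} \<subseteq> e \<Longrightarrow> berge_walk (vs @ [z]) (es @ [e])"
  using berge_walk_append[of vs es "[last vs, z]" "[e]"] by simp

lemma berge_walk_rev: "berge_walk vs es \<Longrightarrow> berge_walk (rev vs) (rev es)"
  unfolding berge_walk_iff_nth
proof (intro conjI allI impI)
  fix i
  assume walk: "length vs = Suc (length es) \<and> (\<forall>i<length es. {vs ! i, vs ! Suc i} \<subseteq> es ! i)"
    and i: "i < length (rev es)"
  let ?j = "length es - Suc i"
  have "rev vs ! i = vs ! Suc ?j" "rev vs ! Suc i = vs ! ?j" "rev es ! i = es ! ?j"
    using walk i by (simp_all add: rev_nth Suc_diff_Suc)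
  then show "{rev vs ! i, rev vs ! Suc i} \<subseteq> rev es ! i" using walk i by auto
qed auto

lemma berge_walk_take:
  "berge_walk vs es \<Longrightarrow> n \<le> length es \<Longrightarrow> berge_walk (take (Suc n) vs) (take n es)"
  unfolding berge_walk_iff_nth by auto

lemma berge_walk_drop:
  "berge_walk vs es \<Longrightarrow> n \<le> length es \<Longrightarrow> berge_walk (drop n vs) (drop n es)"
  unfolding berge_walk_iff_nth by auto

lemma berge_walk_edge_meets_vertices:
  assumes "berge_walk vs es" "e \<in> set es"
  shows "set vs \<inter> e \<noteq> {}"
proof -
  obtain j where "j < length es" "es ! j = e" using assms(2) by (auto simp: in_set_conv_nth)
  then show ?thesis
    using berge_walk_nth_in_edge[OF assms(1)] berge_walk_length[OF assms(1)] by force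
qed

lemma berge_walk_vertices_subset:
  "berge_walk vs es \<Longrightarrow> \<forall>e\<in>set es. e \<subseteq> C \<Longrightarrow> hd vs \<in> C \<Longrightarrow> set vs \<subseteq> C"
  by (induction vs es rule: berge_walk.induct) auto

lemma berge_walk_last_ne_hd:
  assumes "berge_walk vs es" "distinct vs" "es \<noteq> []"
  shows "last vs \<noteq> hd vs"
proof -
  obtain a b rest where "vs = a # b # rest"
    using berge_walk_length[OF assms(1)] assms(3) by (cases vs; cases "tl vs") auto
  then show ?thesis using assms(2) by auto
qed

text \<open>Posa rotation at position i: the segment after vs ! i is reversed and attached to vs ! i by
  an edge g through vs ! i and the old end.\<close>
definition rotate_path_vertices :: "nat \<Rightarrow> 'a list \<Rightarrow> 'a list" where
  "rotate_path_vertices i vs = take (Suc i) vs @ rev (drop (Suc i) vs)"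

definition rotate_path_edges :: "nat \<Rightarrow> 'a set \<Rightarrow> 'a set list \<Rightarrow> 'a set list" where
  "rotate_path_edges i g es = take i es @ g # rev (drop (Suc i) es)"

lemma berge_walk_rotate:
  assumes walk: "berge_walk vs es" and i: "i < length es" and g: "{vs ! i, last vs} \<subseteq> g"
  shows "berge_walk (rotate_path_vertices i vs) (rotate_path_edges i g es)"
proof -
  have L: "length vs = Suc (length es)" using berge_walk_length[OF walk] .
  have take: "take (Suc i) vs = take i vs @ [vs ! i]" using L i by (simp add: take_Suc_conv_app_nth)
  have "rev (drop (Suc i) vs) \<noteq> []" "hd (rev (drop (Suc i) vs)) = last vs"
    using L i by (simp_all add: hd_rev)
  then obtain ys where tail: "rev (drop (Suc i) vs) = last vs # ys"
    by (metis list.collapse)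
  have "berge_walk (take i vs @ [vs ! i]) (take i es)"
    using berge_walk_take[OF walk, of i] i take by simp
  moreover have "berge_walk (last vs # ys) (rev (drop (Suc i) es))"
    using berge_walk_rev[OF berge_walk_drop[OF walk, of "Suc i"]] i tail by simp
  ultimately have "berge_walk (take i vs @ vs ! i # last vs # ys) (rotate_path_edges i g es)"
    unfolding rotate_path_edges_def by (rule berge_walk_join[OF _ g])
  moreover have "take i vs @ vs ! i # last vs # ys = rotate_path_vertices i vs"
    unfolding rotate_path_vertices_def take tail by simp
  ultimately show ?thesis by simp
qed

lemma set_rotate_path_vertices: "set (rotate_path_vertices i vs) = set vs"
proof -
  have "set vs = set (take (Suc i) vs @ drop (Suc i) vs)" by simp
  then show ?thesis unfolding rotate_path_vertices_def by (simp only: set_append set_rev)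
qed

lemma distinct_rotate_path_vertices: "distinct (rotate_path_vertices i vs) \<longleftrightarrow> distinct vs"
proof -
  have "distinct vs = distinct (take (Suc i) vs @ drop (Suc i) vs)" by simp
  then show ?thesis unfolding rotate_path_vertices_def
    by (simp only: distinct_append distinct_rev set_rev)
qed

lemma hd_rotate_path_vertices: "vs \<noteq> [] \<Longrightarrow> hd (rotate_path_vertices i vs) = hd vs"
  unfolding rotate_path_vertices_def by (cases vs) auto

lemma last_rotate_path_vertices:
  "Suc i < length vs \<Longrightarrow> last (rotate_path_vertices i vs) = vs ! Suc i"
  unfolding rotate_path_vertices_def by (simp add: last_rev hd_drop_conv_nth)

lemma length_rotate_path_edges:
  "i < length es \<Longrightarrow> length (rotate_path_edges i g es) = length es"
  unfolding rotate_path_edges_def by simp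

lemma nth_Suc_rotate_path_edges:
  assumes "Suc i < length es"
  shows "rotate_path_edges i g es ! Suc i = last es"
proof -
  have "rotate_path_edges i g es ! Suc i = rev (drop (Suc i) es) ! 0"
    using assms by (simp add: rotate_path_edges_def nth_append)
  also have "\<dots> = hd (rev (drop (Suc i) es))"
    using assms by (simp add: hd_conv_nth)
  also have "\<dots> = last es"
    using assms by (simp add: hd_rev)
  finally show ?thesis .
qed

lemma set_rotate_path_edges:
  assumes "distinct es" "i < length es"
  shows "set (rotate_path_edges i g es) \<subseteq> insert g (set es - {es ! i})"
proof -
  have "distinct (take i es @ es ! i # drop (Suc i) es)" using assms by (simp add: id_take_nth_drop[symmetric])
  then show ?thesis unfolding rotate_path_edges_def by (auto dest: in_set_takeD in_set_dropD)
qed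

lemma distinct_rotate_path_edges:
  assumes "distinct es" "i < length es" "g \<notin> set es"
  shows "distinct (rotate_path_edges i g es)"
proof -
  have "distinct (take i es @ es ! i # drop (Suc i) es)" using assms by (simp add: id_take_nth_drop[symmetric])
  then show ?thesis unfolding rotate_path_edges_def using assms(3)
    by (auto dest: in_set_takeD in_set_dropD)
qed

section \<open>Connectivity\<close>

definition linked :: "'a set set \<Rightarrow> 'a \<Rightarrow> 'a \<Rightarrow> bool" where
  "linked E x y \<longleftrightarrow> (\<exists>e\<in>E. x \<in> e \<and> y \<in> e)"

lemma rtranclp_linked_if_chain:
  "es \<noteq> [] \<Longrightarrow> set es \<subseteq> E \<Longrightarrow> a \<in> hd es \<Longrightarrow> b \<in> last es \<Longrightarrow>
   \<forall>i. Suc i < length es \<longrightarrow> es ! i \<inter> es ! Suc i \<noteq> {} \<Longrightarrow> (linked E)\<^sup>*\<^sup>* a b"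
proof (induction es arbitrary: a)
  case (Cons e rest)
  show ?case
  proof (cases rest)
    case Nil
    then show ?thesis using Cons.prems by (auto simp: linked_def intro: r_into_rtranclp)
  next
    case (Cons e' rest')
    obtain y where y: "y \<in> e" "y \<in> e'"
      using Cons.prems(5)[rule_format, of 0] \<open>rest = e' # rest'\<close> by auto
    have "linked E a y" using Cons.prems y unfolding linked_def by auto
    moreover have "(linked E)\<^sup>*\<^sup>* y b"
    proof (rule Cons.IH)
      show "\<forall>i. Suc i < length rest \<longrightarrow> rest ! i \<inter> rest ! Suc i \<noteq> {}"
        using Cons.prems(5) by (metis Suc_less_eq length_Cons nth_Cons_Suc)
    qed (use Cons.prems y \<open>rest = e' # rest'\<close> in auto)
    ultimately show ?thesis by (rule converse_rtranclp_into_rtranclp)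
  qed
qed simp

lemma chain_if_rtranclp_linked:
  assumes "(linked E)\<^sup>*\<^sup>* u w" "u \<noteq> w"
  shows "\<exists>es. es \<noteq> [] \<and> set es \<subseteq> E \<and> u \<in> hd es \<and> w \<in> last es \<and>
           (\<forall>i. Suc i < length es \<longrightarrow> es ! i \<inter> es ! Suc i \<noteq> {})"
  using assms
proof (induction rule: rtranclp_induct)
  case (step y z)
  obtain e where e: "e \<in> E" "y \<in> e" "z \<in> e" using step(2) unfolding linked_def by auto
  show ?case
  proof (cases "u = y")
    case True
    then show ?thesis using e by (intro exI[of _ "[e]"]) simp
  next
    case False
    then obtain es where es: "es \<noteq> []" "set es \<subseteq> E" "u \<in> hd es" "y \<in> last es"
      "\<forall>i. Suc i < length es \<longrightarrow> es ! i \<inter> es ! Suc i \<noteq> {}" using step(3) by blast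
    have "(es @ [e]) ! i \<inter> (es @ [e]) ! Suc i \<noteq> {}" if i: "Suc i < length (es @ [e])" for i
    proof (cases "Suc i < length es")
      case True
      then show ?thesis using es(5) by (simp add: nth_append)
    next
      case False
      then have "i = length es - 1" "Suc i = length es" using i by simp_all
      then have "(es @ [e]) ! i = last es" "(es @ [e]) ! Suc i = e"
        using es(1) by (simp_all add: nth_append last_conv_nth)
      then show ?thesis using es(4) e(2) by auto
    qed
    then show ?thesis using es e by (intro exI[of _ "es @ [e]"]) auto
  qed
qed simp

lemma hconnected_iff_linked: "hconnected V E \<longleftrightarrow> (\<forall>u\<in>V. \<forall>w\<in>V. (linked E)\<^sup>*\<^sup>* u w)"
  unfolding hconnected_def
  by (metis chain_if_rtranclp_linked rtranclp.rtrancl_refl rtranclp_linked_if_chain)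

lemma rtranclp_linked_sym: "(linked E)\<^sup>*\<^sup>* x y \<Longrightarrow> (linked E)\<^sup>*\<^sup>* y x"
proof -
  have "symp (linked E)" unfolding symp_def linked_def by blast
  then show "(linked E)\<^sup>*\<^sup>* x y \<Longrightarrow> (linked E)\<^sup>*\<^sup>* y x" by (meson symp_rtranclp sympD)
qed

lemma berge_walk_if_rtranclp_linked:
  assumes "(linked E)\<^sup>*\<^sup>* a b"
  shows "\<exists>vs es. berge_walk vs es \<and> set es \<subseteq> E \<and> hd vs = a \<and> last vs = b"
  using assms
proof (induction rule: rtranclp_induct)
  case base
  show ?case by (intro exI[of _ "[a]"] exI[of _ "[]"]) simp
next
  case (step y z)
  obtain vs es where walk: "berge_walk vs es" "set es \<subseteq> E" "hd vs = a" "last vs = y"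
    using step(3) by blast
  obtain e where e: "e \<in> E" "y \<in> e" "z \<in> e" using step(2) unfolding linked_def by auto
  have "berge_walk (vs @ [z]) (es @ [e])" using berge_walk_snoc[OF walk(1)] walk(4) e by simp
  then show ?case using walk e berge_walk_not_Nil[OF walk(1)]
    by (intro exI[of _ "vs @ [z]"] exI[of _ "es @ [e]"]) simp
qed

lemma rtranclp_linked_if_berge_walk:
  "berge_walk vs es \<Longrightarrow> set es \<subseteq> E \<Longrightarrow> y \<in> set vs \<Longrightarrow> (linked E)\<^sup>*\<^sup>* (hd vs) y"
proof (induction vs es rule: berge_walk.induct)
  case (2 v w vs e es)
  then have "linked E v w" unfolding linked_def by auto
  then show ?case using 2 by (auto intro: converse_rtranclp_into_rtranclp)
qed auto

lemma berge_walk_skip_repeated_vertex: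
  assumes walk: "berge_walk vs es" and ab: "a < b" "b < length vs" "vs ! a = vs ! b"
  shows "berge_walk (take (Suc a) vs @ tl (drop b vs)) (take a es @ drop b es)"
    and "hd (take (Suc a) vs @ tl (drop b vs)) = hd vs"
    and "last (take (Suc a) vs @ tl (drop b vs)) = last vs"
proof -
  have L: "length vs = Suc (length es)" using berge_walk_length[OF walk] .
  have glue: "last (take (Suc a) vs) = hd (drop b vs)"
    using ab L by (simp add: take_Suc_conv_app_nth hd_drop_conv_nth)
  show "berge_walk (take (Suc a) vs @ tl (drop b vs)) (take a es @ drop b es)"
    using berge_walk_take[OF walk, of a] berge_walk_drop[OF walk, of b] ab L glue
    by (simp add: berge_walk_append)
  show "hd (take (Suc a) vs @ tl (drop b vs)) = hd vs" using ab by (cases vs) auto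
  have "last (take (Suc a) vs @ tl (drop b vs)) = last (drop b vs)"
    using glue ab by (cases "drop b vs") auto
  then show "last (take (Suc a) vs @ tl (drop b vs)) = last vs" using ab by simp
qed

lemma berge_walk_skip_repeated_edge:
  assumes walk: "berge_walk vs es" and ab: "a < b" "b < length es" "es ! a = es ! b"
  shows "berge_walk (take a vs @ vs ! a # drop (Suc b) vs) (take a es @ es ! a # drop (Suc b) es)"
    and "hd (take a vs @ vs ! a # drop (Suc b) vs) = hd vs"
    and "last (take a vs @ vs ! a # drop (Suc b) vs) = last vs"
proof -
  have L: "length vs = Suc (length es)" using berge_walk_length[OF walk] .
  have drop: "drop (Suc b) vs = vs ! Suc b # drop (Suc (Suc b)) vs"
    using ab L by (simp add: Cons_nth_drop_Suc)
  have "berge_walk (take a vs @ [vs ! a]) (take a es)"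
    using berge_walk_take[OF walk, of a] ab L by (simp add: take_Suc_conv_app_nth)
  moreover have "{vs ! a, vs ! Suc b} \<subseteq> es ! a"
    using berge_walk_nth_in_edge[OF walk, of a] berge_walk_nth_in_edge[OF walk, of b] ab by auto
  moreover have "berge_walk (vs ! Suc b # drop (Suc (Suc b)) vs) (drop (Suc b) es)"
    using berge_walk_drop[OF walk, of "Suc b"] ab drop by simp
  ultimately show "berge_walk (take a vs @ vs ! a # drop (Suc b) vs) (take a es @ es ! a # drop (Suc b) es)"
    unfolding drop by (rule berge_walk_join)
  show "hd (take a vs @ vs ! a # drop (Suc b) vs) = hd vs"
    using ab L by (cases a; cases vs) auto
  show "last (take a vs @ vs ! a # drop (Suc b) vs) = last vs"
    using drop[symmetric] ab L by simp
qed

lemma shortest_walk_between: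
  assumes "(linked E)\<^sup>*\<^sup>* a b" "a \<in> A" "b \<in> B"
  obtains vs es where "berge_path E vs es" "hd vs \<in> A" "last vs \<in> B"
    "\<And>vs' es'. berge_walk vs' es' \<Longrightarrow> set es' \<subseteq> E \<Longrightarrow> hd vs' \<in> A \<Longrightarrow> last vs' \<in> B \<Longrightarrow>
       length es \<le> length es'"
proof -
  define joins where
    "joins vs es \<longleftrightarrow> berge_walk vs es \<and> set es \<subseteq> E \<and> hd vs \<in> A \<and> last vs \<in> B" for vs es
  obtain vs0 es0 where "joins vs0 es0"
    using berge_walk_if_rtranclp_linked[OF assms(1)] assms(2,3) unfolding joins_def by blast
  then obtain p where "joins (fst p) (snd p)"
    and "\<forall>q. joins (fst q) (snd q) \<longrightarrow> length (snd p) \<le> length (snd q)"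
    using ex_has_least_nat[of "\<lambda>p. joins (fst p) (snd p)" "(vs0, es0)" "\<lambda>p. length (snd p)"]
    by auto
  then obtain vs es where walk: "joins vs es"
    and shortest: "\<And>vs' es'. joins vs' es' \<Longrightarrow> length es \<le> length es'"
    by (metis fst_conv snd_conv)
  have W: "berge_walk vs es" and E: "set es \<subseteq> E" and L: "length vs = Suc (length es)"
    using walk berge_walk_length[of vs es] unfolding joins_def by auto
  have "distinct vs"
  proof (rule ccontr)
    assume "\<not> distinct vs"
    then obtain i j where ij: "i < j" "j < length vs" "vs ! i = vs ! j"
      unfolding distinct_conv_nth by (metis linorder_neqE_nat)
    have "set (take i es @ drop j es) \<subseteq> E" using E by (auto dest: in_set_takeD in_set_dropD)
    then have "joins (take (Suc i) vs @ tl (drop j vs)) (take i es @ drop j es)"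
      using berge_walk_skip_repeated_vertex[OF W ij] walk unfolding joins_def by simp
    then show False using shortest ij L by fastforce
  qed
  moreover have "distinct es"
  proof (rule ccontr)
    assume "\<not> distinct es"
    then obtain i j where ij: "i < j" "j < length es" "es ! i = es ! j"
      unfolding distinct_conv_nth by (metis linorder_neqE_nat)
    have "set (take i es @ es ! i # drop (Suc j) es) \<subseteq> E"
      using E ij by (auto dest: in_set_takeD in_set_dropD)
    then have "joins (take i vs @ vs ! i # drop (Suc j) vs) (take i es @ es ! i # drop (Suc j) es)"
      using berge_walk_skip_repeated_edge[OF W ij] walk unfolding joins_def by simp
    then show False using shortest ij by fastforce
  qed
  ultimately show ?thesis using that walk shortest unfolding joins_def berge_path_iff by blast
qed

text \<open>In a shortest such walk an inner vertex in V would cut it short.\<close>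
lemma shortest_bridge:
  assumes "(linked E)\<^sup>*\<^sup>* a b" "a \<in> K" "b \<in> V - K"
  obtains vs es where "berge_path E vs es" "hd vs \<in> K" "last vs \<in> V - K" "es \<noteq> []"
    "\<forall>j. 0 < j \<and> j < length es \<longrightarrow> vs ! j \<notin> V"
proof -
  obtain vs es where path: "berge_path E vs es" and hd: "hd vs \<in> K" and last: "last vs \<in> V - K"
    and shortest: "\<And>vs' es'. berge_walk vs' es' \<Longrightarrow> set es' \<subseteq> E \<Longrightarrow> hd vs' \<in> K \<Longrightarrow>
       last vs' \<in> V - K \<Longrightarrow> length es \<le> length es'"
    using shortest_walk_between[OF assms] by blast
  have walk: "berge_walk vs es" and E: "set es \<subseteq> E" using path unfolding berge_path_iff by auto
  have L: "length vs = Suc (length es)" using berge_walk_length[OF walk] .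
  have "es \<noteq> []"
  proof
    assume "es = []"
    then have "hd vs = last vs" using L by (cases vs) auto
    then show False using hd last by auto
  qed
  moreover have "vs ! j \<notin> V" if j: "0 < j" "j < length es" for j
  proof
    assume jV: "vs ! j \<in> V"
    show False
    proof (cases "vs ! j \<in> K")
      case True
      have "berge_walk (drop j vs) (drop j es)" "hd (drop j vs) \<in> K" "last (drop j vs) \<in> V - K"
        using berge_walk_drop[OF walk, of j] j True last L by (auto simp: hd_drop_conv_nth)
      moreover have "set (drop j es) \<subseteq> E" using E by (auto dest: in_set_dropD)
      ultimately show False using shortest[of "drop j vs" "drop j es"] j by simp
    next
      case False
      have "berge_walk (take (Suc j) vs) (take j es)" using berge_walk_take[OF walk, of j] j by simp
      moreover have "hd (take (Suc j) vs) \<in> K" using hd by (cases vs) auto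
      moreover have "last (take (Suc j) vs) \<in> V - K"
        using False jV j L by (simp add: take_Suc_conv_app_nth)
      moreover have "set (take j es) \<subseteq> E" using E by (auto dest: in_set_takeD)
      ultimately show False using shortest[of "take (Suc j) vs" "take j es"] j by simp
    qed
  qed
  ultimately show ?thesis using that path hd last by blast
qed

lemma berge_path_rev: "berge_path E vs es \<Longrightarrow> berge_path E (rev vs) (rev es)"
  unfolding berge_path_iff using berge_walk_rev by auto

lemma berge_path_append:
  assumes "berge_path E xs es1" "berge_path E ys es2" "last xs = hd ys"
    and "set xs \<inter> set (tl ys) = {}" "set es1 \<inter> set es2 = {}"
  shows "berge_path E (xs @ tl ys) (es1 @ es2)"
  using assms berge_walk_append[of xs es1 ys es2] distinct_tl[of ys]
  unfolding berge_path_iff by auto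

lemma berge_path_mono: "berge_path E vs es \<Longrightarrow> E \<subseteq> E' \<Longrightarrow> berge_path E' vs es"
  unfolding berge_path_iff by auto

lemma berge_path_snoc:
  "berge_path E vs es \<Longrightarrow> e \<in> E \<Longrightarrow> e \<notin> set es \<Longrightarrow> {last vs, z} \<subseteq> e \<Longrightarrow> z \<notin> set vs \<Longrightarrow>
   berge_path E (vs @ [z]) (es @ [e])"
  unfolding berge_path_iff using berge_walk_snoc[of vs es z e] by auto

lemma has_berge_path_if_long:
  "berge_path E vs es \<Longrightarrow> k \<le> length es \<Longrightarrow> has_berge_path E k"
  unfolding has_berge_path_def berge_path_iff
  using berge_walk_take[of vs es k]
  by (metis distinct_take length_take min_absorb2 order_trans set_take_subset)

lemma has_berge_path_mono: "has_berge_path E t \<Longrightarrow> k \<le> t \<Longrightarrow> has_berge_path E k"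
  unfolding has_berge_path_def using has_berge_path_if_long[unfolded has_berge_path_def] by blast

section \<open>Dense uniform hypergraphs without long paths\<close>

lemma card_supersets_of_card:
  assumes "finite S" "A \<subseteq> S"
  shows "card {T. T \<subseteq> S \<and> card T = card A + j \<and> A \<subseteq> T} = (card S - card A) choose j"
proof -
  have finA: "finite A" using assms finite_subset by blast
  have "{T. T \<subseteq> S \<and> card T = card A + j \<and> A \<subseteq> T} = (\<lambda>U. U \<union> A) ` {U. U \<subseteq> S - A \<and> card U = j}"
  proof (intro equalityI subsetI)
    fix T assume T: "T \<in> {T. T \<subseteq> S \<and> card T = card A + j \<and> A \<subseteq> T}"
    then have "finite T" using assms(1) finite_subset by blast
    then have "card (T - A) = j" "T = (T - A) \<union> A" using T finA by (auto simp: card_Diff_subset)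
    then show "T \<in> (\<lambda>U. U \<union> A) ` {U. U \<subseteq> S - A \<and> card U = j}" using T by blast
  next
    fix T assume "T \<in> (\<lambda>U. U \<union> A) ` {U. U \<subseteq> S - A \<and> card U = j}"
    then obtain U where U: "T = U \<union> A" "U \<subseteq> S - A" "card U = j" by auto
    then have "finite U" using assms(1) finite_subset by blast
    moreover have "U \<inter> A = {}" using U by auto
    ultimately have "card T = card A + j" using U finA by (simp add: card_Un_disjoint)
    then show "T \<in> {T. T \<subseteq> S \<and> card T = card A + j \<and> A \<subseteq> T}" using U assms(2) by auto
  qed
  moreover have "inj_on (\<lambda>U. U \<union> A) {U. U \<subseteq> S - A \<and> card U = j}"
    by (rule inj_onI) blast
  ultimately have "card {T. T \<subseteq> S \<and> card T = card A + j \<and> A \<subseteq> T} = card {U. U \<subseteq> S - A \<and> card U = j}"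
    by (simp add: card_image)
  also have "\<dots> = (card S - card A) choose j"
    using n_subsets[of "S - A" j] assms by (simp add: card_Diff_subset finA)
  finally show ?thesis .
qed

lemma many_edges_contradiction:
  fixes e n c d r m :: nat
  assumes "m * e + 2 * c \<le> n * c" "r * c = Suc m * d" "int e \<ge> int d * (int n - int m)"
    and "2 * m + 2 \<le> n" "3 \<le> r" "0 < d" "0 < m"
  shows False
proof -
  have "r * (m * e + 2 * c) \<le> r * (n * c)" using assms(1) by simp
  moreover have "r * (m * e + 2 * c) = r * m * e + 2 * (r * c)" "r * (n * c) = n * (r * c)"
    by (simp_all add: algebra_simps)
  ultimately have "r * m * e + 2 * (Suc m * d) \<le> n * (Suc m * d)"
    using assms(2) by simp
  then have "int (r * m * e + 2 * (Suc m * d)) \<le> int (n * (Suc m * d))"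
    by (simp only: of_nat_le_iff)
  then have A: "int r * int m * int e + 2 * (int m + 1) * int d \<le> int n * (int m + 1) * int d"
    by (simp add: algebra_simps)
  have nm: "int n - int m \<ge> 0" using assms(4) by simp
  have "3 * int m * (int d * (int n - int m)) \<le> int r * int m * (int d * (int n - int m))"
    using assms(5) nm by (intro mult_right_mono) auto
  also have "\<dots> \<le> int r * int m * int e"
    using assms(3) by (intro mult_left_mono) auto
  finally have "int d * (3 * int m * (int n - int m) + 2 * (int m + 1)) \<le> int d * (int n * (int m + 1))"
    using A by (simp add: algebra_simps)
  then have C: "3 * int m * (int n - int m) + 2 * (int m + 1) \<le> int n * (int m + 1)"
    using assms(6) by (simp add: mult_le_cancel_left_pos)
  have "int n * (2 * int m - 1) \<ge> (2 * int m + 2) * (2 * int m - 1)"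
    using assms(4,7) by (intro mult_right_mono) auto
  then have "2 * (int n * int m) - int n \<ge> 4 * (int m * int m) + 2 * int m - 2"
    by (simp add: algebra_simps)
  moreover have "2 * (int n * int m) - int n + 2 * int m + 2 \<le> 3 * (int m * int m)"
    using C by (simp add: algebra_simps)
  moreover have "int m * int m \<ge> 0" by simp
  ultimately show False using assms(7) by linarith
qed

text \<open>Here m stands for (k - 1) div 2, so that k <= 2m + 2, and r + 6 <= m follows from
  k >= 2r + 13; dmin is the degree threshold of the peeling.\<close>
locale uniform_hypergraph =
  fixes F :: "'a set set" and r m :: nat
  assumes card_edge: "e \<in> F \<Longrightarrow> finite e \<and> card e = r"
    and three_le_r: "3 \<le> r" and r_le_m: "r + 6 \<le> m" and finite_edges: "finite F"
begin

definition dmin :: nat where "dmin = m choose (r - 1)"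

lemma dmin_eq: "dmin = ((m - 1) choose (r - 2)) + ((m - 1) choose (r - 1))"
proof -
  have "m = Suc (m - 1)" "r - 1 = Suc (r - 2)" using three_le_r r_le_m by auto
  then show ?thesis unfolding dmin_def by (metis binomial_Suc_Suc)
qed

lemma dmin_pos: "0 < dmin"
  unfolding dmin_def using r_le_m by simp

lemma edge_not_subset_singleton: "e \<in> F \<Longrightarrow> \<not> e \<subseteq> {x}"
  using card_edge[of e] card_mono[of "{x}" e] three_le_r by auto

lemma path_edges_at_end_lt_choose: "(if r = 3 then 3 else m) < (m - 1) choose (r - 2)"
proof (cases "r = 3")
  case False
  have "m - 1 = Suc (m - 2)" "r - 2 = Suc (r - 3)" using three_le_r r_le_m by auto
  then have "(m - 1) choose (r - 2) = ((m - 2) choose (r - 3)) + ((m - 2) choose (r - 2))"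
    by simp
  moreover have "m - 2 \<le> (m - 2) choose (r - 3)" "m - 2 \<le> (m - 2) choose (r - 2)"
    using upper_le_binomial[of "r - 3" "m - 2"] upper_le_binomial[of "r - 2" "m - 2"]
      False three_le_r r_le_m by simp_all
  ultimately show ?thesis using False r_le_m by (simp only: if_False) linarith
qed (use r_le_m in simp)

lemma hdegree_le_inside_plus_leaving:
  assumes "finite P" "\<forall>g\<in>F. y \<in> g \<and> g \<notin> P \<longrightarrow> g \<subseteq> S"
  shows "hdegree F y \<le> card {g\<in>F. y \<in> g \<and> g \<subseteq> S} + card {e\<in>P. y \<in> e \<and> \<not> e \<subseteq> S}"
proof -
  have "{g\<in>F. y \<in> g} \<subseteq> {g\<in>F. y \<in> g \<and> g \<subseteq> S} \<union> {e\<in>P. y \<in> e \<and> \<not> e \<subseteq> S}"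
    using assms(2) by auto
  then have "hdegree F y \<le> card ({g\<in>F. y \<in> g \<and> g \<subseteq> S} \<union> {e\<in>P. y \<in> e \<and> \<not> e \<subseteq> S})"
    unfolding hdegree_def by (rule card_mono[rotated]) (use assms(1) finite_edges in auto)
  also have "\<dots> \<le> card {g\<in>F. y \<in> g \<and> g \<subseteq> S} + card {e\<in>P. y \<in> e \<and> \<not> e \<subseteq> S}"
    by (rule card_Un_le)
  finally show ?thesis .
qed

lemma edges_inside_through:
  "{g\<in>F. y \<in> g \<and> g \<subseteq> S} \<subseteq> {T. T \<subseteq> S \<and> card T = card {y} + (r - 1) \<and> {y} \<subseteq> T}"
  using card_edge three_le_r by auto

lemma card_edges_inside_through:
  assumes "finite S" "y \<in> S"
  shows "card {g\<in>F. y \<in> g \<and> g \<subseteq> S} \<le> (card S - 1) choose (r - 1)"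
proof -
  have "card {g\<in>F. y \<in> g \<and> g \<subseteq> S} \<le> card {T. T \<subseteq> S \<and> card T = card {y} + (r - 1) \<and> {y} \<subseteq> T}"
    by (rule card_mono[OF _ edges_inside_through]) (use assms(1) in auto)
  then show ?thesis using card_supersets_of_card[of S "{y}" "r - 1"] assms by simp
qed

lemma triple_path_edge_through_end:
  assumes "r = 3" "berge_path F vs es" "Suc j < length es" "last vs \<in> es ! j"
  shows "es ! j = {vs ! j, vs ! Suc j, last vs}"
proof -
  have walk: "berge_walk vs es" and "distinct vs" and "set es \<subseteq> F"
    using assms(2) unfolding berge_path_iff by auto
  have L: "length vs = Suc (length es)" using berge_walk_length[OF walk] .
  have "card {vs ! j, vs ! Suc j, last vs} = 3"
    using \<open>distinct vs\<close> assms(3) L berge_walk_last_eq_nth[OF walk]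
    by (simp add: nth_eq_iff_index_eq)
  moreover have "{vs ! j, vs ! Suc j, last vs} \<subseteq> es ! j"
    using berge_walk_nth_in_edge[OF walk, of j] assms(3,4) by auto
  moreover have "es ! j \<in> F" using \<open>set es \<subseteq> F\<close> assms(3) by auto
  then have "finite (es ! j)" "card (es ! j) = 3" using card_edge assms(1) by auto
  ultimately show ?thesis by (metis card_subset_eq)
qed

lemma card_path_edges_leaving_at_end:
  assumes "berge_path F vs es"
  shows "card {e\<in>set es. last vs \<in> e \<and> \<not> e \<subseteq> set vs} \<le> (if r = 3 then 1 else length es)"
proof (cases "r = 3")
  case True
  have "{e\<in>set es. last vs \<in> e \<and> \<not> e \<subseteq> set vs} \<subseteq> {last es}"
  proof
    fix e assume e: "e \<in> {e\<in>set es. last vs \<in> e \<and> \<not> e \<subseteq> set vs}"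
    then obtain j where j: "j < length es" "es ! j = e" by (auto simp: in_set_conv_nth)
    have walk: "berge_walk vs es" using assms unfolding berge_path_iff by simp
    show "e \<in> {last es}"
    proof (cases "Suc j < length es")
      case True
      then have "e = {vs ! j, vs ! Suc j, last vs}"
        using triple_path_edge_through_end[OF \<open>r = 3\<close> assms True] j e by auto
      moreover have "{vs ! j, vs ! Suc j, last vs} \<subseteq> set vs"
        using j berge_walk_length[OF walk] berge_walk_not_Nil[OF walk] by auto
      ultimately show ?thesis using e by auto
    next
      case False
      then have "j = length es - 1" "es \<noteq> []" using j by auto
      then show ?thesis using j by (simp add: last_conv_nth)
    qed
  qed
  then have "card {e\<in>set es. last vs \<in> e \<and> \<not> e \<subseteq> set vs} \<le> card {last es}"
    by (intro card_mono) auto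
  then show ?thesis using True by simp
next
  case False
  have "card {e\<in>set es. last vs \<in> e \<and> \<not> e \<subseteq> set vs} \<le> card (set es)"
    by (rule card_mono) auto
  also have "\<dots> \<le> length es" by (rule card_length)
  finally show ?thesis using False by simp
qed

lemma card_path_edges_at_end:
  assumes "berge_path F vs es" "Suc i < length es"
  shows "card {e\<in>set es. last vs \<in> e \<and> (vs ! i \<in> e \<or> \<not> e \<subseteq> set vs)}
    \<le> (if r = 3 then 3 else length es)"
proof (cases "r = 3")
  case True
  have walk: "berge_walk vs es" and dist: "distinct vs" using assms(1) unfolding berge_path_iff by auto
  have L: "length vs = Suc (length es)" using berge_walk_length[OF walk] .
  have "{e\<in>set es. last vs \<in> e \<and> (vs ! i \<in> e \<or> \<not> e \<subseteq> set vs)} \<subseteq> {es ! (i - 1), es ! i, last es}"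
  proof
    fix e assume e: "e \<in> {e\<in>set es. last vs \<in> e \<and> (vs ! i \<in> e \<or> \<not> e \<subseteq> set vs)}"
    then obtain j where j: "j < length es" "es ! j = e" by (auto simp: in_set_conv_nth)
    show "e \<in> {es ! (i - 1), es ! i, last es}"
    proof (cases "Suc j < length es")
      case True
      have eq: "e = {vs ! j, vs ! Suc j, last vs}"
        using triple_path_edge_through_end[OF \<open>r = 3\<close> assms(1) True] j e by auto
      moreover have "{vs ! j, vs ! Suc j, last vs} \<subseteq> set vs"
        using j L berge_walk_not_Nil[OF walk] by auto
      ultimately have "vs ! i \<in> {vs ! j, vs ! Suc j, vs ! length es}"
        using e berge_walk_last_eq_nth[OF walk] by auto
      then have "i = j \<or> i = Suc j \<or> i = length es"
        using dist assms(2) j L by (auto simp: nth_eq_iff_index_eq)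
      then show ?thesis using assms(2) j by auto
    next
      case False
      then have "j = length es - 1" "es \<noteq> []" using j by auto
      then show ?thesis using j by (simp add: last_conv_nth)
    qed
  qed
  then have "card {e\<in>set es. last vs \<in> e \<and> (vs ! i \<in> e \<or> \<not> e \<subseteq> set vs)} \<le> card {es ! (i - 1), es ! i, last es}"
    by (rule card_mono[rotated]) simp
  also have "\<dots> \<le> 3" by (simp add: card_insert_if)
  finally show ?thesis using True by simp
next
  case False
  have "card {e\<in>set es. last vs \<in> e \<and> (vs ! i \<in> e \<or> \<not> e \<subseteq> set vs)} \<le> card (set es)"
    by (rule card_mono) auto
  also have "\<dots> \<le> length es" by (rule card_length)
  finally show ?thesis using False by simp
qed

text \<open>Otherwise the edges at the end lie inside the path, at most C(m - 1, r - 1) of them, or are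
  path edges, fewer than C(m - 1, r - 2): together fewer than dmin.\<close>
lemma short_path_leaves:
  assumes path: "berge_path F vs es" and "es \<noteq> []" "length es < m"
    and deg: "dmin \<le> hdegree F (last vs)"
  shows "\<exists>g\<in>F. last vs \<in> g \<and> g \<notin> set es \<and> \<not> g \<subseteq> set vs"
proof (rule ccontr)
  assume "\<not> ?thesis"
  then have closed: "\<forall>g\<in>F. last vs \<in> g \<and> g \<notin> set es \<longrightarrow> g \<subseteq> set vs" by blast
  have walk: "berge_walk vs es" and "distinct vs" using path unfolding berge_path_iff by auto
  have card_vs: "card (set vs) = Suc (length es)"
    using distinct_card[OF \<open>distinct vs\<close>] berge_walk_length[OF walk] by simp
  have end_in: "last vs \<in> set vs" using berge_walk_not_Nil[OF walk] by simp
  have "card {g\<in>F. last vs \<in> g \<and> g \<subseteq> set vs} \<le> length es choose (r - 1)"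
    using card_edges_inside_through[OF _ end_in] card_vs by simp
  also have "\<dots> \<le> (m - 1) choose (r - 1)"
    using assms(3) by (intro binomial_right_mono) simp
  finally have inside: "card {g\<in>F. last vs \<in> g \<and> g \<subseteq> set vs} \<le> (m - 1) choose (r - 1)" .
  have "card {e\<in>set es. last vs \<in> e \<and> \<not> e \<subseteq> set vs} < (m - 1) choose (r - 2)"
    using card_path_edges_leaving_at_end[OF path] path_edges_at_end_lt_choose assms(3)
    by (auto split: if_splits)
  then show False
    using hdegree_le_inside_plus_leaving[OF List.finite_set closed] inside deg dmin_eq by fastforce
qed

lemma card_edges_inside_through_le:
  assumes "finite S" "x \<in> S" "y \<in> S" "x \<noteq> y"
    and P: "\<forall>g\<in>F. g \<subseteq> S \<and> x \<in> g \<and> y \<in> g \<longrightarrow> g \<in> P"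
  shows "card {g\<in>F. y \<in> g \<and> g \<subseteq> S} + ((card S - 2) choose (r - 2))
    \<le> ((card S - 1) choose (r - 1)) + card {e\<in>P. y \<in> e \<and> x \<in> e \<and> e \<subseteq> S}"
proof -
  let ?All = "{T. T \<subseteq> S \<and> card T = card {y} + (r - 1) \<and> {y} \<subseteq> T}"
  let ?A = "{g\<in>F. y \<in> g \<and> g \<subseteq> S}"
  let ?B = "{e\<in>P. y \<in> e \<and> x \<in> e \<and> e \<subseteq> S}"
  let ?T = "{T. T \<subseteq> S \<and> card T = card {x, y} + (r - 2) \<and> {x, y} \<subseteq> T}"
  have fin_All: "finite ?All" by (rule finite_subset[of _ "Pow S"]) (use assms(1) in auto)
  have A_All: "?A \<subseteq> ?All" by (rule edges_inside_through)
  have "card {x, y} + (r - 2) = card {y} + (r - 1)" using assms(4) three_le_r by simp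
  then have "?T \<subseteq> (?All - ?A) \<union> ?B" using P by auto
  moreover have "finite ?B" by (rule finite_subset[of _ "Pow S"]) (use assms(1) in auto)
  ultimately have "card ?T \<le> card ((?All - ?A) \<union> ?B)"
    by (intro card_mono) (use fin_All in auto)
  also have "\<dots> \<le> card (?All - ?A) + card ?B" by (rule card_Un_le)
  also have "card (?All - ?A) = card ?All - card ?A"
    using card_Diff_subset[OF finite_subset[OF A_All fin_All] A_All] .
  finally have "card ?A + card ?T \<le> card ?All + card ?B"
    using card_mono[OF fin_All A_All] by linarith
  moreover have "card ?All = (card S - 1) choose (r - 1)"
    using card_supersets_of_card[of S "{y}" "r - 1"] assms(1,3) by simp
  moreover have "card ?T = (card S - 2) choose (r - 2)"
    using card_supersets_of_card[of S "{x, y}" "r - 2"] assms by (simp add: numeral_2_eq_2)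
  ultimately show ?thesis by simp
qed

text \<open>The edge of a Posa rotation exists, or the end vertex would have degree below dmin.\<close>
lemma rotation_edge:
  assumes path: "berge_path F vs es" and len: "length es = m" and i: "Suc i < m"
    and deg: "dmin \<le> hdegree F (last vs)"
    and closed: "\<forall>g\<in>F. last vs \<in> g \<and> g \<notin> set es \<longrightarrow> g \<subseteq> set vs"
  shows "\<exists>g\<in>F. g \<subseteq> set vs \<and> g \<notin> set es \<and> vs ! i \<in> g \<and> last vs \<in> g"
proof (rule ccontr)
  assume none: "\<not> ?thesis"
  let ?y = "last vs" and ?S = "set vs" and ?x = "vs ! i"
  have walk: "berge_walk vs es" and "distinct vs" using path unfolding berge_path_iff by auto
  have L: "length vs = Suc m" using berge_walk_length[OF walk] len by simp
  have card_S: "card ?S = Suc m" using distinct_card[OF \<open>distinct vs\<close>] L by simp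
  have "?y = vs ! m" using berge_walk_last_eq_nth[OF walk] len by simp
  then have xy: "?x \<in> ?S" "?y \<in> ?S" "?x \<noteq> ?y"
    using \<open>distinct vs\<close> i L by (auto simp: nth_eq_iff_index_eq)
  have "card {g\<in>F. ?y \<in> g \<and> g \<subseteq> ?S} + ((m - 1) choose (r - 2))
    \<le> dmin + card {e\<in>set es. ?y \<in> e \<and> ?x \<in> e \<and> e \<subseteq> ?S}"
    using card_edges_inside_through_le[OF _ xy, of "set es"] none card_S unfolding dmin_def by auto
  moreover have "card {e\<in>set es. ?y \<in> e \<and> \<not> e \<subseteq> ?S} + card {e\<in>set es. ?y \<in> e \<and> ?x \<in> e \<and> e \<subseteq> ?S}
    = card {e\<in>set es. ?y \<in> e \<and> (?x \<in> e \<or> \<not> e \<subseteq> ?S)}"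
    by (subst card_Un_disjoint[symmetric]) (auto intro: arg_cong[where f = card])
  moreover have "card {e\<in>set es. ?y \<in> e \<and> (?x \<in> e \<or> \<not> e \<subseteq> ?S)} < (m - 1) choose (r - 2)"
    using card_path_edges_at_end[OF path, of i] path_edges_at_end_lt_choose i unfolding len by simp
  ultimately show False
    using hdegree_le_inside_plus_leaving[OF List.finite_set closed] deg by linarith
qed

abbreviation edges_within :: "'a set \<Rightarrow> 'a set set" where
  "edges_within C \<equiv> {e\<in>F. e \<subseteq> C}"

definition no_long_path_from :: "'a \<Rightarrow> bool" where
  "no_long_path_from u \<longleftrightarrow> \<not> (\<exists>vs es. berge_path F vs es \<and> hd vs = u \<and> length es = Suc m)"

text \<open>The shape of a component of a vertex u after the vertex sets of some paths from u have been
  removed: only u may have lost edges.\<close>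
definition rooted_block :: "'a set \<Rightarrow> 'a \<Rightarrow> bool" where
  "rooted_block C u \<longleftrightarrow> finite C \<and> u \<in> C \<and> (\<forall>e\<in>F. e \<inter> (C - {u}) \<noteq> {} \<longrightarrow> e \<subseteq> C)
     \<and> (\<forall>x\<in>C - {u}. dmin \<le> hdegree F x)"

lemma path_vertices_within:
  "berge_path (edges_within C) vs es \<Longrightarrow> hd vs \<in> C \<Longrightarrow> set vs \<subseteq> C"
  unfolding berge_path_iff using berge_walk_vertices_subset[of vs es C] by auto

lemma path_end_in_rooted_block:
  assumes "rooted_block C u" "berge_path (edges_within C) vs es" "hd vs = u" "es \<noteq> []"
  shows "last vs \<in> C - {u}" "dmin \<le> hdegree F (last vs)"
proof -
  have walk: "berge_walk vs es" and "distinct vs" using assms(2) unfolding berge_path_iff by auto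
  have "last vs \<noteq> u" using berge_walk_last_ne_hd[OF walk \<open>distinct vs\<close> assms(4)] assms(3) by simp
  moreover have "last vs \<in> C"
    using path_vertices_within[OF assms(2)] assms(1,3) berge_walk_not_Nil[OF walk]
    unfolding rooted_block_def by auto
  ultimately show "last vs \<in> C - {u}" by simp
  then show "dmin \<le> hdegree F (last vs)" using assms(1) unfolding rooted_block_def by auto
qed

lemma long_path_in_rooted_block:
  assumes block: "rooted_block C u" and g0: "g0 \<in> F" "u \<in> g0" "g0 \<subseteq> C"
  shows "\<exists>vs es. berge_path (edges_within C) vs es \<and> hd vs = u \<and> length es = m"
proof -
  have "\<exists>vs es. berge_path (edges_within C) vs es \<and> hd vs = u \<and> length es = Suc j"
    if "Suc j \<le> m" for j
    using that
  proof (induction j)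
    case 0
    obtain z where "z \<in> g0" "z \<noteq> u" using edge_not_subset_singleton[OF g0(1)] by auto
    then have "berge_path (edges_within C) [u, z] [g0]" using g0 unfolding berge_path_iff by auto
    then show ?case by force
  next
    case (Suc j)
    then obtain vs es where path: "berge_path (edges_within C) vs es" "hd vs = u" "length es = Suc j"
      by auto
    have "es \<noteq> []" using path(3) by auto
    note tip = path_end_in_rooted_block[OF block path(1,2) this]
    obtain g z where g: "g \<in> F" "last vs \<in> g" "g \<notin> set es" "z \<in> g" "z \<notin> set vs"
      using short_path_leaves[OF berge_path_mono[OF path(1)] \<open>es \<noteq> []\<close> _ tip(2)] path(3) Suc.prems
      by auto
    have "g \<subseteq> C" using block g tip(1) unfolding rooted_block_def by blast
    then have "berge_path (edges_within C) (vs @ [z]) (es @ [g])"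
      using berge_path_snoc[OF path(1)] g by auto
    moreover have "hd (vs @ [z]) = u" using path(1,2) berge_walk_not_Nil[of vs es] unfolding berge_path_iff by auto
    ultimately show ?case using path(3) by force
  qed
  from this[of "m - 1"] show ?thesis using r_le_m by simp
qed

lemma edge_at_end_inside:
  assumes "no_long_path_from u" "berge_path F vs es" "hd vs = u" "length es = m"
    and "g \<in> F" "last vs \<in> g" "g \<notin> set es"
  shows "g \<subseteq> set vs"
proof (rule ccontr)
  assume "\<not> g \<subseteq> set vs"
  then obtain z where "z \<in> g" "z \<notin> set vs" by auto
  then have "berge_path F (vs @ [z]) (es @ [g])" using berge_path_snoc[OF assms(2,5,7)] assms(6) by auto
  moreover have "hd (vs @ [z]) = u" using assms(2,3) berge_walk_not_Nil[of vs es] unfolding berge_path_iff by auto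
  ultimately show False using assms(1,4) unfolding no_long_path_from_def by force
qed

lemma rotated_path:
  assumes long: "no_long_path_from u" and block: "rooted_block C u"
    and path: "berge_path (edges_within C) vs es" "hd vs = u" "length es = m" and i: "Suc i < m"
  obtains g where "g \<in> F" "g \<subseteq> set vs" "g \<notin> set es"
    "berge_path (edges_within C) (rotate_path_vertices i vs) (rotate_path_edges i g es)"
proof -
  have pathF: "berge_path F vs es" using berge_path_mono[OF path(1)] by auto
  have "es \<noteq> []" using path(3) i by auto
  have "\<forall>g\<in>F. last vs \<in> g \<and> g \<notin> set es \<longrightarrow> g \<subseteq> set vs"
    using edge_at_end_inside[OF long pathF path(2,3)] by blast
  then obtain g where g: "g \<in> F" "g \<subseteq> set vs" "g \<notin> set es" "vs ! i \<in> g" "last vs \<in> g"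
    using rotation_edge[OF pathF path(3) i path_end_in_rooted_block(2)[OF block path(1,2) \<open>es \<noteq> []\<close>]]
    by blast
  have walk: "berge_walk vs es" "distinct vs" "distinct es" "set es \<subseteq> edges_within C"
    using path(1) unfolding berge_path_iff by auto
  have "set vs \<subseteq> C" using path_vertices_within[OF path(1)] path(2) block unfolding rooted_block_def by auto
  then have "set (rotate_path_edges i g es) \<subseteq> edges_within C"
    using set_rotate_path_edges[OF walk(3), of i g] walk(4) g(1,2) path(3) i by auto
  moreover have "berge_walk (rotate_path_vertices i vs) (rotate_path_edges i g es)"
    using berge_walk_rotate[OF walk(1)] g(4,5) path(3) i by simp
  moreover have "distinct (rotate_path_vertices i vs)"
    using distinct_rotate_path_vertices walk(2) by blast
  moreover have "distinct (rotate_path_edges i g es)"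
    using distinct_rotate_path_edges[OF walk(3) _ g(3)] path(3) i by simp
  ultimately have "berge_path (edges_within C) (rotate_path_vertices i vs) (rotate_path_edges i g es)"
    unfolding berge_path_iff by blast
  then show ?thesis using that g by blast
qed

text \<open>Rotating at j makes vs ! Suc j the end of a path avoiding es ! j.\<close>
lemma inner_path_edge_inside:
  assumes long: "no_long_path_from u" and block: "rooted_block C u"
    and path: "berge_path (edges_within C) vs es" "hd vs = u" "length es = m" and j: "Suc j < m"
  shows "es ! j \<subseteq> set vs"
proof -
  obtain g where g: "g \<in> F" "g \<notin> set es"
    and rot: "berge_path (edges_within C) (rotate_path_vertices j vs) (rotate_path_edges j g es)"
    using rotated_path[OF long block path j] by blast
  have walk: "berge_walk vs es" and "distinct es" using path(1) unfolding berge_path_iff by auto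
  have ej: "es ! j \<in> set es" using path(3) j by simp
  then have "es ! j \<in> F" using path(1) unfolding berge_path_iff by auto
  have "es ! j \<notin> set (rotate_path_edges j g es)"
    using set_rotate_path_edges[OF \<open>distinct es\<close>, of j g] g(2) ej path(3) j by auto
  moreover have "last (rotate_path_vertices j vs) \<in> es ! j"
    using last_rotate_path_vertices[of j vs] berge_walk_nth_in_edge[OF walk, of j]
      berge_walk_length[OF walk] path(3) j by simp
  moreover have "hd (rotate_path_vertices j vs) = u"
    using hd_rotate_path_vertices[OF berge_walk_not_Nil[OF walk]] path(2) by simp
  ultimately have "es ! j \<subseteq> set (rotate_path_vertices j vs)"
    using edge_at_end_inside[OF long berge_path_mono[OF rot] _ _ \<open>es ! j \<in> F\<close>] path(3) j
      length_rotate_path_edges[of j es g] by auto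
  then show ?thesis by (simp add: set_rotate_path_vertices)
qed

text \<open>The last path edge becomes an inner one after rotating at 0.\<close>
lemma path_edge_inside:
  assumes long: "no_long_path_from u" and block: "rooted_block C u"
    and path: "berge_path (edges_within C) vs es" "hd vs = u" "length es = m" and j: "j < m"
  shows "es ! j \<subseteq> set vs"
proof (cases "Suc j < m")
  case True
  then show ?thesis using inner_path_edge_inside[OF long block path] by blast
next
  case False
  have "Suc 0 < m" "Suc 1 < m" using r_le_m by simp_all
  obtain g where "berge_path (edges_within C) (rotate_path_vertices 0 vs) (rotate_path_edges 0 g es)"
    using rotated_path[OF long block path \<open>Suc 0 < m\<close>] by blast
  moreover have "hd (rotate_path_vertices 0 vs) = u" "length (rotate_path_edges 0 g es) = m"
    using hd_rotate_path_vertices length_rotate_path_edges[of 0 es g] path(1,2,3) \<open>Suc 0 < m\<close>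
      berge_walk_not_Nil[of vs es] unfolding berge_path_iff by auto
  ultimately have "rotate_path_edges 0 g es ! 1 \<subseteq> set (rotate_path_vertices 0 vs)"
    using inner_path_edge_inside[OF long block _ _ _ \<open>Suc 1 < m\<close>] by blast
  moreover have "rotate_path_edges 0 g es ! 1 = es ! j"
  proof -
    have "j = length es - 1" "es \<noteq> []" using path(3) j False by auto
    then show ?thesis using nth_Suc_rotate_path_edges[of 0 es g] path(3) \<open>Suc 0 < m\<close>
      by (simp add: last_conv_nth)
  qed
  ultimately show ?thesis by (simp add: set_rotate_path_vertices)
qed

text \<open>An edge at vs ! j that is off the path: rotating at j - 1 moves vs ! j to the end.\<close>
lemma edge_at_path_vertex_inside:
  assumes long: "no_long_path_from u" and block: "rooted_block C u"
    and path: "berge_path (edges_within C) vs es" "hd vs = u" "length es = m"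
    and g: "g \<in> F" "x \<in> g" "x \<in> set vs" "x \<noteq> u"
  shows "g \<subseteq> set vs"
proof (cases "g \<in> set es")
  case True
  then show ?thesis using path_edge_inside[OF long block path] path(3) by (auto simp: in_set_conv_nth)
next
  case g_new: False
  have walk: "berge_walk vs es" using path(1) unfolding berge_path_iff by simp
  have pathF: "berge_path F vs es" using berge_path_mono[OF path(1)] by auto
  obtain j where j: "j < Suc m" "vs ! j = x"
    using g(3) berge_walk_length[OF walk] path(3) by (auto simp: in_set_conv_nth)
  have "j \<noteq> 0"
  proof
    assume "j = 0"
    then show False using j g(4) path(2) berge_walk_not_Nil[OF walk] by (simp add: hd_conv_nth)
  qed
  show ?thesis
  proof (cases "j = m")
    case True
    then have "x = last vs" using j berge_walk_last_eq_nth[OF walk] path(3) by simp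
    then show ?thesis using edge_at_end_inside[OF long pathF path(2,3) g(1) _ g_new] g(2) by simp
  next
    case False
    then have i: "Suc (j - 1) < m" "Suc (j - 1) = j" using j \<open>j \<noteq> 0\<close> by auto
    obtain g' where g': "g' \<subseteq> set vs" "g' \<notin> set es"
      and rot: "berge_path (edges_within C) (rotate_path_vertices (j - 1) vs) (rotate_path_edges (j - 1) g' es)"
      using rotated_path[OF long block path i(1)] by blast
    show ?thesis
    proof (cases "g = g'")
      case False
      have "distinct es" using path(1) unfolding berge_path_iff by simp
      then have "g \<notin> set (rotate_path_edges (j - 1) g' es)"
        using set_rotate_path_edges[of es "j - 1" g'] g_new False path(3) i by auto
      moreover have "last (rotate_path_vertices (j - 1) vs) \<in> g"
        using last_rotate_path_vertices[of "j - 1" vs] berge_walk_length[OF walk] path(3) i j g(2) by simp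
      moreover have "hd (rotate_path_vertices (j - 1) vs) = u"
        using hd_rotate_path_vertices[OF berge_walk_not_Nil[OF walk]] path(2) by simp
      ultimately have "g \<subseteq> set (rotate_path_vertices (j - 1) vs)"
        using edge_at_end_inside[OF long berge_path_mono[OF rot] _ _ g(1)] path(3) i
          length_rotate_path_edges[of "j - 1" es g'] by auto
      then show ?thesis by (simp add: set_rotate_path_vertices)
    qed (use g' in simp)
  qed
qed

lemma edge_at_root_if_linked:
  "(linked (edges_within C))\<^sup>*\<^sup>* u x \<Longrightarrow> x \<noteq> u \<Longrightarrow> \<exists>e\<in>F. e \<subseteq> C \<and> u \<in> e"
  by (induction rule: converse_rtranclp_induct) (auto simp: linked_def)

lemma absorbing_path_vertices:
  assumes long: "no_long_path_from u" and block: "rooted_block C u" and "C \<noteq> {u}"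
    and linked: "\<forall>x\<in>C. (linked (edges_within C))\<^sup>*\<^sup>* u x"
  obtains S where "u \<in> S" "S \<subseteq> C" "card S = Suc m" "\<forall>g\<in>F. g \<inter> (S - {u}) \<noteq> {} \<longrightarrow> g \<subseteq> S"
proof -
  obtain x where "x \<in> C" "x \<noteq> u" using \<open>C \<noteq> {u}\<close> block unfolding rooted_block_def by auto
  then obtain g0 where "g0 \<in> F" "g0 \<subseteq> C" "u \<in> g0"
    using edge_at_root_if_linked linked by meson
  then obtain vs es where path: "berge_path (edges_within C) vs es" "hd vs = u" "length es = m"
    using long_path_in_rooted_block[OF block] by blast
  have walk: "berge_walk vs es" and "distinct vs" using path(1) unfolding berge_path_iff by auto
  show ?thesis
  proof (rule that)
    show "u \<in> set vs" using path(2) berge_walk_not_Nil[OF walk] by auto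
    show "set vs \<subseteq> C" using path_vertices_within[OF path(1)] path(2) block
      unfolding rooted_block_def by auto
    show "card (set vs) = Suc m"
      using distinct_card[OF \<open>distinct vs\<close>] berge_walk_length[OF walk] path(3) by simp
    show "\<forall>g\<in>F. g \<inter> (set vs - {u}) \<noteq> {} \<longrightarrow> g \<subseteq> set vs"
      using edge_at_path_vertex_inside[OF long block path] by blast
  qed
qed

lemma rooted_block_Diff:
  assumes block: "rooted_block C u" and absorbing: "\<forall>g\<in>F. g \<inter> (S - {u}) \<noteq> {} \<longrightarrow> g \<subseteq> S"
  shows "rooted_block (C - (S - {u})) u"
  unfolding rooted_block_def
proof (intro conjI ballI impI)
  fix e assume e: "e \<in> F" "e \<inter> (C - (S - {u}) - {u}) \<noteq> {}"
  then have "e \<subseteq> C" using block unfolding rooted_block_def by blast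
  moreover have "e \<inter> (S - {u}) = {}" using absorbing e by blast
  ultimately show "e \<subseteq> C - (S - {u})" by blast
qed (use block in \<open>auto simp: rooted_block_def\<close>)

lemma rtranclp_linked_Diff_absorbing:
  assumes "(linked (edges_within C))\<^sup>*\<^sup>* u y" "y \<in> C - (S - {u})"
    and absorbing: "\<forall>g\<in>F. g \<inter> (S - {u}) \<noteq> {} \<longrightarrow> g \<subseteq> S"
  shows "(linked (edges_within (C - (S - {u}))))\<^sup>*\<^sup>* u y"
  using assms(1,2)
proof (induction rule: rtranclp_induct)
  case (step y z)
  then obtain e where e: "e \<in> F" "e \<subseteq> C" "y \<in> e" "z \<in> e" unfolding linked_def by auto
  show ?case
  proof (cases "e \<inter> (S - {u}) = {}")
    case True
    then have "e \<subseteq> C - (S - {u})" using e by auto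
    then have "y \<in> C - (S - {u})" "linked (edges_within (C - (S - {u}))) y z"
      using e unfolding linked_def by auto
    then show ?thesis using step by (meson rtranclp.rtrancl_into_rtrancl)
  next
    case False
    then have "z = u" using absorbing e step.prems by auto
    then show ?thesis by simp
  qed
qed simp

lemma card_edges_within_absorbed:
  assumes "finite S" and absorbing: "\<forall>g\<in>F. g \<inter> (S - {u}) \<noteq> {} \<longrightarrow> g \<subseteq> S"
  shows "card (edges_within C) \<le> card (edges_within (C - (S - {u}))) + (card S choose r)"
proof -
  have "edges_within C \<subseteq> edges_within (C - (S - {u})) \<union> {T. T \<subseteq> S \<and> card T = r}"
  proof
    fix e assume e: "e \<in> edges_within C"
    show "e \<in> edges_within (C - (S - {u})) \<union> {T. T \<subseteq> S \<and> card T = r}"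
    proof (cases "e \<inter> (S - {u}) = {}")
      case True
      then show ?thesis using e by auto
    next
      case False
      then show ?thesis using e absorbing card_edge by auto
    qed
  qed
  then have "card (edges_within C) \<le> card (edges_within (C - (S - {u})) \<union> {T. T \<subseteq> S \<and> card T = r})"
    by (rule card_mono[rotated]) (use finite_edges assms(1) in auto)
  also have "\<dots> \<le> card (edges_within (C - (S - {u}))) + card {T. T \<subseteq> S \<and> card T = r}"
    by (rule card_Un_le)
  finally show ?thesis using n_subsets[OF assms(1), of r] by simp
qed

text \<open>Peel off the vertex sets of paths of length m from the root one at a time: each carries
  at most all r-subsets of its m + 1 vertices.\<close>
lemma card_edges_within_rooted_block:
  "no_long_path_from u \<Longrightarrow> rooted_block C u \<Longrightarrow> \<forall>x\<in>C. (linked (edges_within C))\<^sup>*\<^sup>* u x \<Longrightarrow>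
   m * card (edges_within C) \<le> (card C - 1) * (Suc m choose r) \<and> (C \<noteq> {u} \<longrightarrow> Suc m \<le> card C)"
proof (induction "card C" arbitrary: C rule: less_induct)
  case less
  note long = less.prems(1) and block = less.prems(2) and linked = less.prems(3)
  have "finite C" "u \<in> C" using block unfolding rooted_block_def by auto
  show ?case
  proof (cases "C = {u}")
    case True
    then have "edges_within C = {}" using edge_not_subset_singleton by blast
    then show ?thesis using True by simp
  next
    case False
    obtain S where S: "u \<in> S" "S \<subseteq> C" "card S = Suc m"
      and absorbing: "\<forall>g\<in>F. g \<inter> (S - {u}) \<noteq> {} \<longrightarrow> g \<subseteq> S"
      using absorbing_path_vertices[OF long block False linked] by blast
    define W where "W = C - (S - {u})"
    have card_C: "Suc m \<le> card C" using card_mono[OF \<open>finite C\<close> S(2)] S(3) by simp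
    have "S - {u} \<subseteq> C" "finite (S - {u})" using S \<open>finite C\<close> finite_subset by auto
    then have card_W: "card W = card C - m"
      unfolding W_def using card_Diff_subset[of "S - {u}" C] S by simp
    have IH: "m * card (edges_within W) \<le> (card W - 1) * (Suc m choose r)"
    proof -
      have "card W < card C" using card_W card_C r_le_m by simp
      moreover have "\<forall>y\<in>W. (linked (edges_within W))\<^sup>*\<^sup>* u y"
        using rtranclp_linked_Diff_absorbing[OF _ _ absorbing] linked unfolding W_def by blast
      ultimately show ?thesis
        using less.hyps[OF _ long rooted_block_Diff[OF block absorbing]] unfolding W_def by blast
    qed
    have "finite S" using S(2) \<open>finite C\<close> finite_subset by blast
    then have "card (edges_within C) \<le> card (edges_within W) + (Suc m choose r)"
      using card_edges_within_absorbed[OF _ absorbing, of C] S(3) unfolding W_def by simp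
    then have "m * card (edges_within C) \<le> m * card (edges_within W) + m * (Suc m choose r)"
      by (metis add_mult_distrib2 mult_le_mono2)
    also have "\<dots> \<le> (card W - 1 + m) * (Suc m choose r)"
      using IH by (simp add: add_mult_distrib)
    finally have "m * card (edges_within C) \<le> (card W - 1 + m) * (Suc m choose r)" .
    moreover have "card W - 1 + m = card C - 1" using card_W card_C by simp
    ultimately show ?thesis using card_C by simp
  qed
qed

definition edge_closed :: "'a set \<Rightarrow> bool" where
  "edge_closed X \<longleftrightarrow> (\<forall>e\<in>F. e \<inter> X \<noteq> {} \<longrightarrow> e \<subseteq> X)"

abbreviation component :: "'a \<Rightarrow> 'a set" where
  "component x \<equiv> {y. (linked F)\<^sup>*\<^sup>* x y}"

lemma rtranclp_linked_in_edge_closed: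
  "(linked F)\<^sup>*\<^sup>* x y \<Longrightarrow> edge_closed X \<Longrightarrow> x \<in> X \<Longrightarrow> y \<in> X"
  by (induction rule: rtranclp_induct) (auto simp: linked_def edge_closed_def)

lemma edge_closed_component: "edge_closed (component x)"
  unfolding edge_closed_def
proof (intro ballI impI subsetI)
  fix e z assume e: "e \<in> F" "e \<inter> component x \<noteq> {}" "z \<in> e"
  then obtain y where "y \<in> e" "(linked F)\<^sup>*\<^sup>* x y" by auto
  moreover have "linked F y z" using e \<open>y \<in> e\<close> unfolding linked_def by auto
  ultimately show "z \<in> component x" by (simp add: rtranclp.rtrancl_into_rtrancl)
qed

lemma rtranclp_linked_within_component:
  "(linked F)\<^sup>*\<^sup>* u x \<Longrightarrow> (linked (edges_within (component u)))\<^sup>*\<^sup>* u x"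
proof (induction rule: rtranclp_induct)
  case (step y z)
  then obtain e where e: "e \<in> F" "y \<in> e" "z \<in> e" unfolding linked_def by auto
  then have "e \<subseteq> component u" using edge_closed_component step(1) unfolding edge_closed_def by blast
  then have "linked (edges_within (component u)) y z" unfolding linked_def using e by auto
  with step(3) show ?case by (rule rtranclp.rtrancl_into_rtrancl)
qed simp

lemma card_edges_within_split:
  assumes "edge_closed K" "K \<subseteq> X" "edge_closed X"
  shows "card (edges_within X) = card (edges_within K) + card (edges_within (X - K))"
    and "edge_closed (X - K)"
proof -
  have "edges_within X = edges_within K \<union> edges_within (X - K)"
    using assms(1,2) unfolding edge_closed_def by blast
  moreover have "edges_within K \<inter> edges_within (X - K) = {}"
    using edge_not_subset_singleton by blast
  ultimately show "card (edges_within X) = card (edges_within K) + card (edges_within (X - K))"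
    by (simp add: card_Un_disjoint finite_edges)
  show "edge_closed (X - K)" using assms(1,3) unfolding edge_closed_def by blast
qed

lemma card_edges_within_component:
  assumes "finite (component y)" "\<forall>x\<in>component y. dmin \<le> hdegree F x" "no_long_path_from y"
  shows "m * card (edges_within (component y)) + (Suc m choose r) \<le> card (component y) * (Suc m choose r)
    \<and> Suc m \<le> card (component y)"
proof -
  have "edge_closed (component y)" by (rule edge_closed_component)
  then have block: "rooted_block (component y) y"
    using assms(1,2) unfolding rooted_block_def edge_closed_def by auto
  have "hdegree F y > 0" using assms(2) dmin_pos by fastforce
  then obtain g where "g \<in> F" "y \<in> g" unfolding hdegree_def by (auto simp: card_gt_0_iff)
  moreover obtain z where "z \<in> g" "z \<noteq> y" using edge_not_subset_singleton[OF \<open>g \<in> F\<close>] by auto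
  ultimately have "z \<in> component y" "z \<noteq> y" unfolding linked_def by auto
  then have "component y \<noteq> {y}" by blast
  then have bound: "m * card (edges_within (component y)) \<le> (card (component y) - 1) * (Suc m choose r)"
    and card: "Suc m \<le> card (component y)"
    using card_edges_within_rooted_block[OF assms(3) block] rtranclp_linked_within_component by auto
  have "(card (component y) - 1) * (Suc m choose r) + (Suc m choose r) = card (component y) * (Suc m choose r)"
    using card by (cases "card (component y)") auto
  then show ?thesis using bound card by linarith
qed

lemma card_edges_within_edge_closed:
  assumes fin: "finite V" and deg: "\<forall>x\<in>V. dmin \<le> hdegree F x"
  shows "X \<subseteq> V \<Longrightarrow> edge_closed X \<Longrightarrow> X \<noteq> {} \<Longrightarrow>
    \<forall>x\<in>X. \<exists>y. (linked F)\<^sup>*\<^sup>* x y \<and> no_long_path_from y \<Longrightarrow>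
    m * card (edges_within X) + (Suc m choose r) \<le> card X * (Suc m choose r) \<and> Suc m \<le> card X"
proof (induction "card X" arbitrary: X rule: less_induct)
  case less
  have "finite X" using less.prems(1) fin finite_subset by blast
  obtain x where "x \<in> X" using less.prems(3) by auto
  then obtain y where "(linked F)\<^sup>*\<^sup>* x y" "no_long_path_from y" using less.prems(4) by blast
  then have "y \<in> X" using rtranclp_linked_in_edge_closed less.prems(2) \<open>x \<in> X\<close> by blast
  then have KX: "component y \<subseteq> X"
    using rtranclp_linked_in_edge_closed less.prems(2) by blast
  have K: "m * card (edges_within (component y)) + (Suc m choose r) \<le> card (component y) * (Suc m choose r)"
    "Suc m \<le> card (component y)"
    using card_edges_within_component[OF _ _ \<open>no_long_path_from y\<close>] KX \<open>finite X\<close> deg less.prems(1)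
      finite_subset by (metis (no_types, lifting) subset_iff)+
  have split: "card (edges_within X) = card (edges_within (component y)) + card (edges_within (X - component y))"
    "edge_closed (X - component y)"
    using card_edges_within_split[OF edge_closed_component KX less.prems(2)] by auto
  have card_X: "card X = card (component y) + card (X - component y)"
    using card_Diff_subset[OF finite_subset[OF KX \<open>finite X\<close>] KX] card_mono[OF \<open>finite X\<close> KX] by simp
  show ?case
  proof (cases "X - component y = {}")
    case True
    then have "edges_within (X - component y) = {}" using edge_not_subset_singleton by blast
    then have "card (edges_within (X - component y)) = 0" "card (X - component y) = 0"
      using True by (simp_all only: card.empty)
    then show ?thesis using K split(1) card_X by simp
  next
    case False
    have "m * card (edges_within (X - component y)) + (Suc m choose r) \<le> card (X - component y) * (Suc m choose r)"
      using less.hyps[OF _ _ split(2) False] card_X K(2) less.prems(1,4) by auto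
    then show ?thesis using K split card_X by (simp add: algebra_simps)
  qed
qed

text \<open>Each of the two edge-closed parts contributes the excess C(m + 1, r) in its bound.\<close>
lemma few_edges_if_no_long_paths:
  assumes fin: "finite V" and edges: "\<forall>e\<in>F. e \<subseteq> V" and deg: "\<forall>x\<in>V. dmin \<le> hdegree F x"
    and stuck: "\<forall>x\<in>V. \<exists>y. (linked F)\<^sup>*\<^sup>* x y \<and> no_long_path_from y"
    and disconnected: "u \<in> V" "w \<in> V" "\<not> (linked F)\<^sup>*\<^sup>* u w"
  shows "int (card F) < int dmin * (int (card V) - int m)"
proof (rule ccontr)
  assume many: "\<not> ?thesis"
  let ?c = "Suc m choose r"
  have closed: "edge_closed V" using edges unfolding edge_closed_def by auto
  let ?K = "component u"
  have KV: "?K \<subseteq> V" using rtranclp_linked_in_edge_closed[OF _ closed disconnected(1)] by blast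
  have split: "card (edges_within V) = card (edges_within ?K) + card (edges_within (V - ?K))"
    "edge_closed (V - ?K)"
    using card_edges_within_split[OF edge_closed_component KV closed] by auto
  have K: "m * card (edges_within ?K) + ?c \<le> card ?K * ?c \<and> Suc m \<le> card ?K"
    using card_edges_within_edge_closed[OF fin deg KV edge_closed_component] stuck KV by blast
  have rest: "m * card (edges_within (V - ?K)) + ?c \<le> card (V - ?K) * ?c \<and> Suc m \<le> card (V - ?K)"
    using card_edges_within_edge_closed[OF fin deg _ split(2)] stuck disconnected by blast
  have "edges_within V = F" using edges by auto
  moreover have "card V = card ?K + card (V - ?K)"
    using card_Diff_subset[OF finite_subset[OF KV fin] KV] card_mono[OF fin KV] by simp
  ultimately have "m * card F + 2 * ?c \<le> card V * ?c" "2 * m + 2 \<le> card V"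
    using K rest split(1) by (simp_all add: algebra_simps)
  moreover have "r * ?c = Suc m * dmin"
    using Suc_times_binomial_eq[of m "r - 1"] three_le_r unfolding dmin_def by (simp add: mult.commute)
  ultimately show False
    using many_edges_contradiction[of m "card F" ?c "card V" r dmin] many three_le_r dmin_pos r_le_m
    by linarith
qed

lemma path_within_component:
  assumes "berge_path F vs es"
  shows "set vs \<subseteq> component (hd vs)" "\<forall>e\<in>set es. e \<subseteq> component (hd vs)"
proof -
  have walk: "berge_walk vs es" and edges: "set es \<subseteq> F" using assms unfolding berge_path_iff by auto
  show vs: "set vs \<subseteq> component (hd vs)" using rtranclp_linked_if_berge_walk[OF walk edges] by blast
  show "\<forall>e\<in>set es. e \<subseteq> component (hd vs)"
    using berge_walk_edge_meets_vertices[OF walk] vs edges edge_closed_component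
    unfolding edge_closed_def by blast
qed

text \<open>A one-edge bridge has one end in the edge-closed set K and one outside, and every edge of a
  longer one contains an inner vertex outside V.\<close>
lemma bridge_avoids_edges:
  assumes closed: "edge_closed K" and edges: "\<forall>e\<in>F. e \<subseteq> V" and walk: "berge_walk vs es"
    and ends: "hd vs \<in> K" "last vs \<notin> K" and inner: "\<forall>j. 0 < j \<and> j < length es \<longrightarrow> vs ! j \<notin> V"
  shows "set es \<inter> F = {}"
proof -
  have "es ! j \<notin> F" if j: "j < length es" for j
  proof (cases "length es = 1")
    case True
    then have "hd vs \<in> es ! j" "last vs \<in> es ! j"
      using berge_walk_nth_in_edge[OF walk j] berge_walk_last_eq_nth[OF walk] j
        berge_walk_not_Nil[OF walk] by (auto simp: hd_conv_nth)
    then show ?thesis using closed ends unfolding edge_closed_def by blast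
  next
    case False
    define t where "t = (if j = 0 then 1 else j)"
    have "0 < t" "t < length es" using False j unfolding t_def by auto
    moreover have "vs ! t \<in> es ! j"
      using berge_walk_nth_in_edge[OF walk j] unfolding t_def by auto
    ultimately show ?thesis using inner edges by blast
  qed
  then show ?thesis by (auto simp: in_set_conv_nth)
qed

lemma bridge_from_component:
  assumes edges: "\<forall>e\<in>F. e \<subseteq> V" and connected: "\<forall>a\<in>V. \<forall>b\<in>V. (linked E)\<^sup>*\<^sup>* a b"
    and x: "x \<in> V" and z: "z \<in> V" "z \<notin> component x"
  obtains vs es where "berge_path E vs es" "hd vs \<in> component x" "last vs \<in> V - component x"
    "es \<noteq> []" "set es \<inter> F = {}" "set (tl vs) \<subseteq> - component x \<inter> (- V \<union> {last vs})"
proof -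
  obtain vs es where bridge: "berge_path E vs es" "hd vs \<in> component x" "last vs \<in> V - component x"
    "es \<noteq> []" and inner: "\<forall>j. 0 < j \<and> j < length es \<longrightarrow> vs ! j \<notin> V"
    using shortest_bridge[OF connected[rule_format, OF x z(1)], of "component x"] z by auto
  have walk: "berge_walk vs es" using bridge(1) unfolding berge_path_iff by simp
  have "set es \<inter> F = {}"
    using bridge_avoids_edges[OF edge_closed_component edges walk _ _ inner] bridge(2,3) by blast
  moreover have "y \<notin> component x \<and> (y \<notin> V \<or> y = last vs)" if y: "y \<in> set (tl vs)" for y
  proof -
    obtain i where i: "i < length es" "y = vs ! Suc i"
      using y berge_walk_length[OF walk] by (auto simp: in_set_conv_nth nth_tl)
    show ?thesis
    proof (cases "Suc i = length es")
      case True
      then show ?thesis using i bridge(3) berge_walk_last_eq_nth[OF walk] by auto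
    next
      case False
      then have "y \<notin> V" using inner i by auto
      then show ?thesis using rtranclp_linked_in_edge_closed[of x _ V] x edges
        unfolding edge_closed_def by auto
    qed
  qed
  ultimately show ?thesis using that bridge by blast
qed

lemma long_path_outside_component:
  assumes fin: "finite V" and edges: "\<forall>e\<in>F. e \<subseteq> V" and deg: "\<forall>x\<in>V. dmin \<le> hdegree F x"
    and w: "w \<in> V" "w \<notin> component x"
  obtains vs es where "berge_path F vs es" "hd vs = w" "length es = m" "set vs \<subseteq> V - component x"
proof -
  have block: "rooted_block V w" using fin w edges deg unfolding rooted_block_def by auto
  have "hdegree F w > 0" using deg w dmin_pos by fastforce
  then obtain g0 where "g0 \<in> F" "w \<in> g0" unfolding hdegree_def by (auto simp: card_gt_0_iff)
  then obtain vs es where path: "berge_path (edges_within V) vs es" "hd vs = w" "length es = m"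
    using long_path_in_rooted_block[OF block] edges by blast
  have path_F: "berge_path F vs es" using berge_path_mono[OF path(1)] by auto
  have "y \<notin> component x" if y: "y \<in> set vs" for y
  proof
    assume "y \<in> component x"
    have "y \<in> component (hd vs)" using path_within_component(1)[OF path_F] y by blast
    then have "(linked F)\<^sup>*\<^sup>* y w" using path(2) rtranclp_linked_sym by simp
    with \<open>y \<in> component x\<close> have "w \<in> component x" by (simp add: rtranclp_trans)
    then show False using w(2) by simp
  qed
  moreover have "set vs \<subseteq> V" using path_vertices_within[OF path(1)] path(2) w(1) by blast
  ultimately show ?thesis using that path_F path(2,3) by blast
qed

text \<open>A path of length m + 1 ending in the component of x, a bridge leaving it, and a path of
  length m outside it join into one Berge path.\<close>
lemma long_berge_path_via_bridge:
  assumes fin: "finite V" and edges: "\<forall>e\<in>F. e \<subseteq> V" and deg: "\<forall>x\<in>V. dmin \<le> hdegree F x"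
    and FE: "F \<subseteq> E" and connected: "\<forall>a\<in>V. \<forall>b\<in>V. (linked E)\<^sup>*\<^sup>* a b"
    and x: "x \<in> V" and unstuck: "\<forall>y\<in>component x. \<not> no_long_path_from y"
    and z: "z \<in> V" "z \<notin> component x"
  shows "has_berge_path E (2 * m + 2)"
proof -
  let ?K = "component x"
  obtain vs es where bridge: "berge_path E vs es" "hd vs \<in> ?K" "last vs \<in> V - ?K" "es \<noteq> []"
    "set es \<inter> F = {}" "set (tl vs) \<subseteq> - ?K \<inter> (- V \<union> {last vs})"
    using bridge_from_component[OF edges connected x z] by blast
  obtain vs1 es1 where P1: "berge_path F vs1 es1" "hd vs1 = hd vs" "length es1 = Suc m"
    using unstuck bridge(2) unfolding no_long_path_from_def by blast
  have "component (hd vs) = ?K"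
    using bridge(2) rtranclp_linked_sym[of F x "hd vs"] by (auto intro: rtranclp_trans)
  then have P1_K: "set vs1 \<subseteq> ?K" "\<forall>e\<in>set es1. e \<subseteq> ?K"
    using path_within_component[OF P1(1)] P1(2) by auto
  obtain vs2 es2 where P2: "berge_path F vs2 es2" "hd vs2 = last vs" "length es2 = m"
    "set vs2 \<subseteq> V - ?K"
    using long_path_outside_component[OF fin edges deg] bridge(3) by blast
  have ne: "vs \<noteq> []" "vs1 \<noteq> []" "vs2 \<noteq> []"
    using bridge(1) P1(1) P2(1) berge_walk_not_Nil unfolding berge_path_iff by blast+
  have "berge_path E (rev vs1 @ tl vs) (rev es1 @ es)"
  proof (rule berge_path_append[OF berge_path_rev[OF berge_path_mono[OF P1(1) FE]] bridge(1)])
    show "last (rev vs1) = hd vs" using P1(2) ne by (simp add: last_rev)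
    show "set (rev vs1) \<inter> set (tl vs) = {}" using P1_K bridge(6) by auto
    show "set (rev es1) \<inter> set es = {}" using P1(1) bridge(5) unfolding berge_path_iff by auto
  qed
  moreover have "last (rev vs1 @ tl vs) = hd vs2"
    using last_append_tl[of "rev vs1" vs] P1(2) P2(2) ne by (simp add: last_rev)
  ultimately have "berge_path E ((rev vs1 @ tl vs) @ tl vs2) ((rev es1 @ es) @ es2)"
  proof (rule berge_path_append[OF _ berge_path_mono[OF P2(1) FE]])
    have "hd vs2 \<notin> set (tl vs2)" "set (tl vs2) \<subseteq> set vs2"
      using P2(1) ne unfolding berge_path_iff by (cases vs2; auto)+
    then have "set (tl vs2) \<subseteq> V - ?K - {last vs}" using P2(2,4) by auto
    moreover have "set (rev vs1 @ tl vs) \<subseteq> ?K \<union> - V \<union> {last vs}" using P1_K bridge(6) by auto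
    ultimately show "set (rev vs1 @ tl vs) \<inter> set (tl vs2) = {}" by blast
    have "\<forall>e\<in>set es2. \<not> e \<subseteq> ?K"
      using P2(1,4) berge_walk_edge_meets_vertices[of vs2 es2] unfolding berge_path_iff by blast
    then show "set (rev es1 @ es) \<inter> set es2 = {}" using P1_K P2(1) bridge(5)
      unfolding berge_path_iff by fastforce
  qed
  moreover have "2 * m + 2 \<le> length ((rev es1 @ es) @ es2)"
    using P1(3) P2(3) bridge(4) by (simp add: Suc_le_eq)
  ultimately show ?thesis by (rule has_berge_path_if_long)
qed

lemma hconnected_if_many_edges:
  assumes fin: "finite V" and edges: "\<forall>e\<in>F. e \<subseteq> V" and deg: "\<forall>x\<in>V. dmin \<le> hdegree F x"
    and FE: "F \<subseteq> E" and connected: "\<forall>a\<in>V. \<forall>b\<in>V. (linked E)\<^sup>*\<^sup>* a b"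
    and no_path: "\<not> has_berge_path E (2 * m + 2)"
    and many: "int (card F) \<ge> int dmin * (int (card V) - int m)"
  shows "hconnected V F"
proof (rule ccontr)
  assume "\<not> hconnected V F"
  then obtain u w where uw: "u \<in> V" "w \<in> V" "\<not> (linked F)\<^sup>*\<^sup>* u w"
    unfolding hconnected_iff_linked by blast
  show False
  proof (cases "\<forall>x\<in>V. \<exists>y. (linked F)\<^sup>*\<^sup>* x y \<and> no_long_path_from y")
    case True
    then show False using few_edges_if_no_long_paths[OF fin edges deg True uw] many by linarith
  next
    case False
    then obtain x where x: "x \<in> V" "\<forall>y\<in>component x. \<not> no_long_path_from y" by blast
    have "\<exists>z\<in>V. z \<notin> component x"
    proof (rule ccontr)
      assume "\<not> ?thesis"
      then have "(linked F)\<^sup>*\<^sup>* x u" "(linked F)\<^sup>*\<^sup>* x w" using uw by auto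
      then have "(linked F)\<^sup>*\<^sup>* u w" using rtranclp_linked_sym rtranclp_trans by metis
      then show False using uw(3) by simp
    qed
    then show False using long_berge_path_via_bridge[OF fin edges deg FE connected x] no_path by blast
  qed
qed

end

section \<open>Peeling\<close>

lemma peel_rtranclp_invariant:
  assumes "(peel_step d)\<^sup>*\<^sup>* (V, E) q" "finite V" "\<forall>e\<in>E. e \<subseteq> V"
  shows "fst q \<subseteq> V \<and> snd q = {e\<in>E. e \<subseteq> fst q} \<and> card E \<le> card (snd q) + d * (card V - card (fst q))"
  using assms(1)
proof (induction rule: rtranclp_induct)
  case base
  then show ?case using assms(3) by auto
next
  case (step p q)
  have fin_E: "finite E" using assms(2,3) by (meson finite_Pow_iff finite_subset PowI subsetI)
  from step(2) show ?case
  proof cases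
    case (1 v Vc Ec)
    have IH: "Vc \<subseteq> V" "Ec = {e\<in>E. e \<subseteq> Vc}" "card E \<le> card Ec + d * (card V - card Vc)"
      using step(3) 1 by auto
    have "finite Ec" using IH(2) fin_E by simp
    then have "card Ec = card {e\<in>Ec. v \<notin> e} + card {e\<in>Ec. v \<in> e}"
      by (subst card_Un_disjoint[symmetric]) (auto intro: arg_cong[where f = card])
    moreover have "card {e\<in>Ec. v \<in> e} < d" using 1 unfolding hdegree_def by simp
    moreover have "card (Vc - {v}) = card Vc - 1" using 1 by simp
    moreover have "card Vc \<le> card V" "1 \<le> card Vc"
      using card_mono[OF assms(2) IH(1)] 1 IH(1) assms(2)
      by (auto simp: Suc_le_eq card_gt_0_iff intro: finite_subset)
    ultimately have "card E \<le> card {e\<in>Ec. v \<notin> e} + d * (card V - card (Vc - {v}))"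
      using IH(3) by (simp add: algebra_simps diff_mult_distrib2)
    moreover have "{e\<in>Ec. v \<notin> e} = {e\<in>E. e \<subseteq> Vc - {v}}" using IH(2) by auto
    ultimately show ?thesis using 1 IH by auto
  qed
qed

lemma peel_terminal_min_degree:
  assumes "\<not> (\<exists>H. peel_step d (V, E) H)" "v \<in> V"
  shows "d \<le> hdegree E v"
  using assms peel_step.intros[of v V E d] by (meson not_le)

lemma card_edges_after_peeling:
  fixes d m n n' e e' :: nat
  assumes "e \<le> e' + d * (n - n')" "n' \<le> n" "int e \<ge> int d * (int n - int m)"
  shows "int e' \<ge> int d * (int n' - int m)"
proof -
  have "int e \<le> int (e' + d * (n - n'))" using assms(1) by (simp only: of_nat_le_iff)
  also have "\<dots> = int e' + int d * (int n - int n')" using assms(2) by (simp add: of_nat_diff)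
  finally show ?thesis using assms(3) by (simp add: algebra_simps)
qed

theorem claim2:
  fixes r k n :: nat and V :: "'a set" and E :: "'a set set"
    and V' :: "'a set" and E' :: "'a set set"
  assumes "r \<ge> 3" and "k \<ge> 2 * r + 13"
  defines "m \<equiv> (k - 1) div 2"
  defines "f \<equiv> (\<lambda>n::nat. int (m choose (r - 1)) * (int n - int m) + int (m choose r)
                     + int (ind_even k) * int (m choose (r - 2)))"
  defines "N \<equiv> int ((r * (k - 1)) choose r) + int (m choose (r - 1)) * int m
               - int (m choose r) - int (ind_even k) * int (m choose (r - 2))
               + int (r * (k - 1))"
  assumes "int n > N"
    and "r_graph r V E" and "card V = n"
    and "hconnected V E"
    and "\<not> has_berge_path E k"
    and "int (card E) \<ge> f n"
    and "(peel_step (m choose (r - 1)))\<^sup>*\<^sup>* (V, E) (V', E')"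
    and "\<not> (\<exists>H''. peel_step (m choose (r - 1)) (V', E') H'')"
  shows "hconnected V' E'"
proof -
  have fin: "finite V" and edges: "\<forall>e\<in>E. e \<subseteq> V \<and> card e = r"
    using assms(7) unfolding r_graph_def by auto
  have V': "V' \<subseteq> V" and E': "E' = {e\<in>E. e \<subseteq> V'}"
    and peeled: "card E \<le> card E' + (m choose (r - 1)) * (card V - card V')"
    using peel_rtranclp_invariant[OF assms(12) fin] edges by auto
  have "finite V'" using V' fin finite_subset by blast
  then have "finite E'" "\<forall>e\<in>E'. finite e" using E' finite_subset[of E' "Pow V'"] finite_subset by auto
  then interpret uniform_hypergraph E' r m
    using assms(1,2) edges E' by unfold_locales (auto simp: m_def)
  show ?thesis
  proof (rule hconnected_if_many_edges)
    show "\<forall>x\<in>V'. dmin \<le> hdegree E' x"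
      using peel_terminal_min_degree[OF assms(13)] unfolding dmin_def by blast
    show "\<forall>a\<in>V'. \<forall>b\<in>V'. (linked E)\<^sup>*\<^sup>* a b" using assms(9) V' unfolding hconnected_iff_linked by blast
    have "k \<le> 2 * m + 2" unfolding m_def by simp
    then show "\<not> has_berge_path E (2 * m + 2)" using assms(10) has_berge_path_mono by blast
    have "0 \<le> int (ind_even k) * int (m choose (r - 2))" by simp
    then have "int (m choose (r - 1)) * (int (card V) - int m) \<le> int (card E)"
      using assms(11) unfolding f_def assms(8) by linarith
    then show "int dmin * (int (card V') - int m) \<le> int (card E')"
      using card_edges_after_peeling[OF peeled card_mono[OF fin V']] unfolding dmin_def by blast
  qed (use \<open>finite V'\<close> E' in auto)
qed

end
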